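(* Let $P,R$ be real constants, and let $\Omega_1,\Omega_3\in\mathbb{R}$. Work in the layer $D=\{(x,y,z):x,y\in\mathbb{R},\ -\tfrac12<z<\tfrac12\}$. Suppose $\mathbf v(x,y,z,t)=(v_x,v_y,v_z)$, $\theta(x,y,z,t)$ and $p(x,y,z,t)$ are smooth and satisfy $$\frac{\partial\mathbf v}{\partial t}=\mathbf v\times(\nabla\times\mathbf v)+P\,\mathbf v\times\boldsymbol\Omega+P\Delta\mathbf v+PR\,\theta\,\mathbf e_z-\nabla p,\qquad \frac{\partial\theta}{\partial t}=-(\mathbf v\cdot\nabla)\theta+v_z+\Delta\theta,\qquad \nabla\cdot\mathbf v=0$$ in $D$ with $\boldsymbol\Omega=(\Omega_1,0,\Omega_3)$, and suppose that $\mathbf v$ and $\theta$ depend only on $x$, $z$ (and $t$), not on $y$. Then for every $\Omega_2\in\mathbb{R}$ there is a modified pressure $\hat p$ such that $(\mathbf v,\theta,\hat p)$ satisfies the same three equations with $\boldsymbol\Omega=(\Omega_1,\Omega_2,\Omega_3)$.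
   Context: $\mathbf e_z=(0,0,1)$; $x,y$ are horizontal and $z$ vertical Cartesian coordinates. These are the dimensionless Boussinesq convection equations in a layer rotating with angular velocity $\boldsymbol\Omega$, with $P$ the Prandtl number and $R$ the Rayleigh number. No boundary conditions are imposed. *)

theory Defs
  imports "HOL-Analysis.Analysis"
begin

type_synonym field = "real \<Rightarrow> real \<Rightarrow> real \<Rightarrow> real \<Rightarrow> real"
  (* arguments: x y z t *)

definition layer :: "(real \<times> real \<times> real \<times> real) set" where
  "layer = {(x,y,z,t). -1/2 < z \<and> z < 1/2}"

definition pd :: "nat \<Rightarrow> field \<Rightarrow> field" where
  "pd i f = (\<lambda>x y z t.
     if i = 0 then deriv (\<lambda>s. f s y z t) x
     else if i = 1 then deriv (\<lambda>s. f x s z t) y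
     else if i = 2 then deriv (\<lambda>s. f x y s t) z
     else deriv (\<lambda>s. f x y z s) t)"

definition pdiff :: "nat \<Rightarrow> field \<Rightarrow> real \<Rightarrow> real \<Rightarrow> real \<Rightarrow> real \<Rightarrow> bool" where
  "pdiff i f x y z t \<longleftrightarrow>
     (if i = 0 then (\<lambda>s. f s y z t) differentiable (at x)
      else if i = 1 then (\<lambda>s. f x s z t) differentiable (at y)
      else if i = 2 then (\<lambda>s. f x y s t) differentiable (at z)
      else (\<lambda>s. f x y z s) differentiable (at t))"

definition iter_pd :: "nat list \<Rightarrow> field \<Rightarrow> field" where
  "iter_pd ds f = foldr pd ds f"

definition smooth_on :: "(real \<times> real \<times> real \<times> real) set \<Rightarrow> field \<Rightarrow> bool" where
  "smooth_on U f \<longleftrightarrow>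
     (\<forall>ds. set ds \<subseteq> {0..3} \<longrightarrow>
        continuous_on U (\<lambda>(x,y,z,t). iter_pd ds f x y z t) \<and>
        (\<forall>i\<le>3. \<forall>(x,y,z,t)\<in>U. pdiff i (iter_pd ds f) x y z t))"

abbreviation "dX \<equiv> pd 0"
abbreviation "dY \<equiv> pd 1"
abbreviation "dZ \<equiv> pd 2"
abbreviation "dT \<equiv> pd 3"

definition lap :: "field \<Rightarrow> field" where
  "lap f = (\<lambda>x y z t. dX (dX f) x y z t + dY (dY f) x y z t + dZ (dZ f) x y z t)"

text \<open>The rotating Boussinesq equations, written componentwise, holding at every
  point of D x R, with Omega = (O1,O2,O3).
  curl v = (w1,w2,w3) with w1 = dy vz - dz vy, w2 = dz vx - dx vz, w3 = dx vy - dy vx;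
  v x curl v = (vy w3 - vz w2, vz w1 - vx w3, vx w2 - vy w1);
  v x Omega = (vy O3 - vz O2, vz O1 - vx O3, vx O2 - vy O1).\<close>
definition boussinesq ::
  "real \<Rightarrow> real \<Rightarrow> real \<Rightarrow> real \<Rightarrow> real \<Rightarrow> field \<Rightarrow> field \<Rightarrow> field \<Rightarrow> field \<Rightarrow> field \<Rightarrow> bool" where
  "boussinesq P R O1 O2 O3 vx vy vz \<theta> p \<longleftrightarrow>
    (\<forall>(x,y,z,t)\<in>layer.
      (let w1 = dY vz x y z t - dZ vy x y z t;
           w2 = dZ vx x y z t - dX vz x y z t;
           w3 = dX vy x y z t - dY vx x y z t;
           a = vx x y z t; b = vy x y z t; c = vz x y z t
       in
       dT vx x y z t = (b * w3 - c * w2) + P * (b * O3 - c * O2)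
                        + P * lap vx x y z t - dX p x y z t
     \<and> dT vy x y z t = (c * w1 - a * w3) + P * (c * O1 - a * O3)
                        + P * lap vy x y z t - dY p x y z t
     \<and> dT vz x y z t = (a * w2 - b * w1) + P * (a * O2 - b * O1)
                        + P * lap vz x y z t + P * R * \<theta> x y z t - dZ p x y z t
     \<and> dT \<theta> x y z t = - (a * dX \<theta> x y z t + b * dY \<theta> x y z t + c * dZ \<theta> x y z t)
                        + c + lap \<theta> x y z t
     \<and> dX vx x y z t + dY vy x y z t + dZ vz x y z t = 0))"

definition indep_y :: "field \<Rightarrow> bool" where
  "indep_y f \<longleftrightarrow> (\<forall>x y y' z t. -1/2 < z \<and> z < 1/2 \<longrightarrow> f x y z t = f x y' z t)"

end

theory Submission
  imports Defs
begin

(* The extra Coriolis term P v \<times> (0, \<Omega>2, 0) = P \<Omega>2 (-vz, 0, vx) enters only the x- and z-momentum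
   equations. For a flow independent of y, incompressibility reduces to dX vx + dZ vz = 0, so this
   term is the gradient of P \<Omega>2 \<psi> for the stream function
     \<psi>(x, z, t) = \<integral>\<^sub>0\<^sup>z vx(x, s, t) ds - \<integral>\<^sub>0\<^sup>x vz(r, 0, t) dr,
   and the modified pressure p + P \<Omega>2 \<psi> absorbs it. The real work is the smoothness of \<psi>:
   each partial derivative of such a primitive is again a primitive of a partial derivative, or a
   component of v, so smoothness follows by a closure argument on iterated derivatives. *)

lemma mem_layer_iff [simp]: "(x, y, z, t) \<in> layer \<longleftrightarrow> -1/2 < z \<and> z < 1/2"
  by (simp add: layer_def)

lemma ball_layer_iff: "(\<forall>(x, y, z, t)\<in>layer. P x y z t) \<longleftrightarrow> (\<forall>x y z t. -1/2 < z \<and> z < 1/2 \<longrightarrow> P x y z t)"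
  by (auto simp: layer_def)

lemma open_layer: "open layer"
proof -
  have "open ((\<lambda>q :: real \<times> real \<times> real \<times> real. fst (snd (snd q))) -` {-1/2<..<1/2})"
    by (auto intro!: open_vimage continuous_intros)
  moreover have "layer = (\<lambda>q. fst (snd (snd q))) -` {-1/2<..<1/2}"
    by (auto simp: layer_def)
  ultimately show ?thesis
    by simp
qed

section \<open>Locality of partial derivatives\<close>

lemma eventually_eq_along:
  assumes "open U" "\<forall>p\<in>U. F p = G p" "continuous_on UNIV \<gamma>" "\<gamma> s \<in> U"
  shows "\<forall>\<^sub>F r in nhds s. F (\<gamma> r) = G (\<gamma> r)"
proof -
  have "\<forall>\<^sub>F r in nhds s. r \<in> \<gamma> -` U"
    using assms by (intro eventually_nhds_in_open open_vimage) auto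
  then show ?thesis
    by eventually_elim (use assms(2) in auto)
qed

lemma deriv_differentiable_cong_ev:
  fixes \<phi> \<psi> :: "real \<Rightarrow> real"
  assumes "\<forall>\<^sub>F r in nhds s. \<phi> r = \<psi> r"
  shows "deriv \<phi> s = deriv \<psi> s" "\<phi> differentiable at s \<longleftrightarrow> \<psi> differentiable at s"
proof -
  show "deriv \<phi> s = deriv \<psi> s"
    using deriv_cong_ev[OF assms refl] .
  show "\<phi> differentiable at s \<longleftrightarrow> \<psi> differentiable at s"
    unfolding real_differentiable_def using DERIV_cong_ev[OF refl assms refl] by blast
qed

lemma
  assumes "open U" and eq: "\<forall>(x, y, z, t)\<in>U. f x y z t = g x y z t" and "(x, y, z, t) \<in> U"
  shows pd_cong_on: "pd i f x y z t = pd i g x y z t"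
    and pdiff_cong_on: "pdiff i f x y z t \<longleftrightarrow> pdiff i g x y z t"
proof -
  have ev: "\<forall>\<^sub>F r in nhds s. f (a r) (b r) (c r) (d r) = g (a r) (b r) (c r) (d r)"
    if "continuous_on UNIV (\<lambda>r. (a r, b r, c r, d r))" "(a s, b s, c s, d s) \<in> U"
    for a b c d :: "real \<Rightarrow> real" and s
    using eventually_eq_along[OF assms(1), of "\<lambda>(x, y, z, t). f x y z t" "\<lambda>(x, y, z, t). g x y z t", OF _ that] eq
    by (simp add: case_prod_unfold)
  have "\<forall>\<^sub>F r in nhds x. f r y z t = g r y z t" "\<forall>\<^sub>F r in nhds y. f x r z t = g x r z t"
    "\<forall>\<^sub>F r in nhds z. f x y r t = g x y r t" "\<forall>\<^sub>F r in nhds t. f x y z r = g x y z r"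
    using ev[of "\<lambda>r. r" "\<lambda>_. y" "\<lambda>_. z" "\<lambda>_. t" x] ev[of "\<lambda>_. x" "\<lambda>r. r" "\<lambda>_. z" "\<lambda>_. t" y]
      ev[of "\<lambda>_. x" "\<lambda>_. y" "\<lambda>r. r" "\<lambda>_. t" z] ev[of "\<lambda>_. x" "\<lambda>_. y" "\<lambda>_. z" "\<lambda>r. r" t] assms(3)
    by (simp_all add: continuous_on_Pair)
  note cong = this[THEN deriv_differentiable_cong_ev(1)] this[THEN deriv_differentiable_cong_ev(2)]
  show "pd i f x y z t = pd i g x y z t" "pdiff i f x y z t \<longleftrightarrow> pdiff i g x y z t"
    by (simp_all add: pd_def pdiff_def cong)
qed

lemma iter_pd_cong_on:
  assumes "open U" "\<forall>(x, y, z, t)\<in>U. f x y z t = g x y z t"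
  shows "\<forall>(x, y, z, t)\<in>U. iter_pd ds f x y z t = iter_pd ds g x y z t"
proof (induction ds)
  case Nil
  then show ?case using assms(2) by (simp add: iter_pd_def)
next
  case (Cons i ds)
  then show ?case
    using pd_cong_on[OF assms(1) Cons.IH] by (auto simp: iter_pd_def)
qed

section \<open>Smooth functions on an open set\<close>

lemma smooth_on_imp_continuous_on: "smooth_on U f \<Longrightarrow> continuous_on U (\<lambda>(x, y, z, t). f x y z t)"
  unfolding smooth_on_def by (drule spec[of _ "[]"]) (simp add: iter_pd_def)

lemma smooth_on_imp_pdiff: "smooth_on U f \<Longrightarrow> i \<le> 3 \<Longrightarrow> (x, y, z, t) \<in> U \<Longrightarrow> pdiff i f x y z t"
  unfolding smooth_on_def by (drule spec[of _ "[]"]) (auto simp: iter_pd_def)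

lemma iter_pd_snoc: "iter_pd (ds @ [i]) f = iter_pd ds (pd i f)"
  by (simp add: iter_pd_def)

lemma smooth_on_pd: "smooth_on U f \<Longrightarrow> i \<le> 3 \<Longrightarrow> smooth_on U (pd i f)"
  unfolding smooth_on_def
proof (intro allI impI)
  fix ds :: "nat list"
  assume smooth: "\<forall>ds. set ds \<subseteq> {0..3} \<longrightarrow>
      continuous_on U (\<lambda>(x, y, z, t). iter_pd ds f x y z t) \<and>
      (\<forall>i\<le>3. \<forall>(x, y, z, t)\<in>U. pdiff i (iter_pd ds f) x y z t)"
    and "i \<le> 3" "set ds \<subseteq> {0..3}"
  then have "set (ds @ [i]) \<subseteq> {0..3}"
    by auto
  from smooth[rule_format, OF this] show "continuous_on U (\<lambda>(x, y, z, t). iter_pd ds (pd i f) x y z t) \<and>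
      (\<forall>j\<le>3. \<forall>(x, y, z, t)\<in>U. pdiff j (iter_pd ds (pd i f)) x y z t)"
    unfolding iter_pd_snoc .
qed

lemma smooth_on_partials:
  assumes "smooth_on U f" "(x, y, z, t) \<in> U"
  shows "((\<lambda>s. f s y z t) has_field_derivative dX f x y z t) (at x)"
    and "((\<lambda>s. f x s z t) has_field_derivative dY f x y z t) (at y)"
    and "((\<lambda>s. f x y s t) has_field_derivative dZ f x y z t) (at z)"
    and "((\<lambda>s. f x y z s) has_field_derivative dT f x y z t) (at t)"
  using smooth_on_imp_pdiff[OF assms(1) _ assms(2), of 0] smooth_on_imp_pdiff[OF assms(1) _ assms(2), of 1]
    smooth_on_imp_pdiff[OF assms(1) _ assms(2), of 2] smooth_on_imp_pdiff[OF assms(1) _ assms(2), of 3]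
  by (simp_all add: pdiff_def pd_def DERIV_deriv_iff_real_differentiable)

lemma partials_imp_pd_pdiff:
  assumes "((\<lambda>s. f s y z t) has_field_derivative D 0) (at x)"
    and "((\<lambda>s. f x s z t) has_field_derivative D 1) (at y)"
    and "((\<lambda>s. f x y s t) has_field_derivative D 2) (at z)"
    and "((\<lambda>s. f x y z s) has_field_derivative D 3) (at t)"
    and "i \<le> 3"
  shows "pd i f x y z t = D i" "pdiff i f x y z t"
proof -
  have "i = 0 \<or> i = 1 \<or> i = 2 \<or> i = 3"
    using \<open>i \<le> 3\<close> by auto
  then show "pd i f x y z t = D i" "pdiff i f x y z t"
    using assms(1-4) by (auto simp: pd_def pdiff_def DERIV_imp_deriv real_differentiable_def)
qed

lemma smooth_on_family:
  assumes "open U"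
    and cont: "\<And>a. Q a \<Longrightarrow> continuous_on U (\<lambda>(x, y, z, t). \<Phi> a x y z t)"
    and diff: "\<And>a i x y z t. Q a \<Longrightarrow> i \<le> 3 \<Longrightarrow> (x, y, z, t) \<in> U \<Longrightarrow> pdiff i (\<Phi> a) x y z t"
    and pd_closed: "\<And>a i. Q a \<Longrightarrow> i \<le> 3 \<Longrightarrow>
      (\<exists>b. Q b \<and> (\<forall>(x, y, z, t)\<in>U. pd i (\<Phi> a) x y z t = \<Phi> b x y z t)) \<or>
      (\<exists>g. smooth_on U g \<and> (\<forall>(x, y, z, t)\<in>U. pd i (\<Phi> a) x y z t = g x y z t))"
    and "Q a"
  shows "smooth_on U (\<Phi> a)"
proof -
  define regular where "regular f \<longleftrightarrow> continuous_on U (\<lambda>(x, y, z, t). f x y z t) \<and>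
    (\<forall>i\<le>3. \<forall>(x, y, z, t)\<in>U. pdiff i f x y z t)" for f
  have regular_cong: "regular (iter_pd ds f)"
    if "regular (iter_pd ds g)" "\<forall>(x, y, z, t)\<in>U. f x y z t = g x y z t" for ds f g
  proof -
    note eq = iter_pd_cong_on[OF \<open>open U\<close> that(2), of ds]
    have "continuous_on U (\<lambda>(x, y, z, t). iter_pd ds g x y z t)"
      using that(1) by (simp add: regular_def)
    then have "continuous_on U (\<lambda>(x, y, z, t). iter_pd ds f x y z t)"
      by (rule continuous_on_eq) (use eq in auto)
    then show ?thesis
      using that(1) pdiff_cong_on[OF \<open>open U\<close> eq] unfolding regular_def by fastforce
  qed
  have smooth_iff: "smooth_on U f \<longleftrightarrow> (\<forall>ds. set ds \<subseteq> {0..3} \<longrightarrow> regular (iter_pd ds f))" for f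
    by (simp add: smooth_on_def regular_def)
  have regular_iter: "regular (iter_pd ds (\<Phi> a))" if "set ds \<subseteq> {0..3}" "Q a" for ds a
    using that
  proof (induction ds arbitrary: a rule: rev_induct)
    case Nil
    then show ?case
      using cont[OF \<open>Q a\<close>] diff[OF \<open>Q a\<close>] by (auto simp: regular_def iter_pd_def)
  next
    case (snoc i ds)
    then have i: "i \<le> 3" and ds: "set ds \<subseteq> {0..3}"
      by auto
    from pd_closed[OF \<open>Q a\<close> i] show ?case
    proof (elim disjE exE conjE)
      fix b
      assume "Q b" and eq: "\<forall>(x, y, z, t)\<in>U. pd i (\<Phi> a) x y z t = \<Phi> b x y z t"
      have "regular (iter_pd ds (\<Phi> b))"
        using snoc.IH[OF ds \<open>Q b\<close>] .
      then show ?thesis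
        unfolding iter_pd_snoc by (rule regular_cong[OF _ eq])
    next
      fix g
      assume "smooth_on U g" and eq: "\<forall>(x, y, z, t)\<in>U. pd i (\<Phi> a) x y z t = g x y z t"
      then have "regular (iter_pd ds g)"
        using ds unfolding smooth_iff by blast
      then show ?thesis
        unfolding iter_pd_snoc by (rule regular_cong[OF _ eq])
    qed
  qed
  then show ?thesis
    using \<open>Q a\<close> by (simp add: smooth_iff)
qed

lemma smooth_on_const:
  assumes "open U"
  shows "smooth_on U (\<lambda>x y z t. c)"
proof (rule smooth_on_family[where Q = "\<lambda>_. True" and \<Phi> = "\<lambda>c x y z t. c"])
  show "pdiff i (\<lambda>x y z t. c) x y z t" for c i x y z t
    by (simp add: pdiff_def)
  show "(\<exists>b. True \<and> (\<forall>(x, y, z, t)\<in>U. pd i (\<lambda>x y z t. c) x y z t = b)) \<or>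
      (\<exists>g. smooth_on U g \<and> (\<forall>(x, y, z, t)\<in>U. pd i (\<lambda>x y z t. c) x y z t = g x y z t))" for c i
    by (rule disjI1, rule exI[of _ 0]) (simp add: pd_def)
qed (simp_all add: assms)

lemma
  assumes "smooth_on U f" "smooth_on U g" "(x, y, z, t) \<in> U" "i \<le> 3"
  shows pd_add_scaled: "pd i (\<lambda>x y z t. f x y z t + c * g x y z t) x y z t = pd i f x y z t + c * pd i g x y z t"
    and pdiff_add_scaled: "pdiff i (\<lambda>x y z t. f x y z t + c * g x y z t) x y z t"
proof -
  note F = smooth_on_partials[OF assms(1,3)] and G = smooth_on_partials[OF assms(2,3)]
  have "((\<lambda>s. f s y z t + c * g s y z t) has_field_derivative dX f x y z t + c * dX g x y z t) (at x)"
    "((\<lambda>s. f x s z t + c * g x s z t) has_field_derivative dY f x y z t + c * dY g x y z t) (at y)"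
    "((\<lambda>s. f x y s t + c * g x y s t) has_field_derivative dZ f x y z t + c * dZ g x y z t) (at z)"
    "((\<lambda>s. f x y z s + c * g x y z s) has_field_derivative dT f x y z t + c * dT g x y z t) (at t)"
    by (rule DERIV_add[OF F(1) DERIV_cmult[OF G(1)]] DERIV_add[OF F(2) DERIV_cmult[OF G(2)]]
        DERIV_add[OF F(3) DERIV_cmult[OF G(3)]] DERIV_add[OF F(4) DERIV_cmult[OF G(4)]])+
  from partials_imp_pd_pdiff[where D = "\<lambda>i. pd i f x y z t + c * pd i g x y z t", OF this assms(4)]
  show "pd i (\<lambda>x y z t. f x y z t + c * g x y z t) x y z t = pd i f x y z t + c * pd i g x y z t"
    "pdiff i (\<lambda>x y z t. f x y z t + c * g x y z t) x y z t"
    by simp_all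
qed

lemma smooth_on_add_scaled:
  assumes "open U" "smooth_on U f" "smooth_on U g"
  shows "smooth_on U (\<lambda>x y z t. f x y z t + c * g x y z t)"
proof -
  let ?Q = "\<lambda>(f, g). smooth_on U f \<and> smooth_on U g"
  let ?\<Phi> = "\<lambda>(f, g) x y z t. f x y z t + c * g x y z t"
  have "smooth_on U (?\<Phi> (f, g))"
  proof (rule smooth_on_family[of U ?Q ?\<Phi>])
    show "continuous_on U (\<lambda>(x, y, z, t). ?\<Phi> a x y z t)" if "?Q a" for a
    proof -
      obtain f g where a: "a = (f, g)" and "smooth_on U f" "smooth_on U g"
        using \<open>?Q a\<close> by auto
      then have "continuous_on U (\<lambda>p. (\<lambda>(x, y, z, t). f x y z t) p + c * (\<lambda>(x, y, z, t). g x y z t) p)"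
        by (intro continuous_intros smooth_on_imp_continuous_on)
      then show ?thesis
        by (rule continuous_on_eq) (auto simp: a)
    qed
    show "pdiff i (?\<Phi> a) x y z t" if "?Q a" "i \<le> 3" "(x, y, z, t) \<in> U" for a i x y z t
      using that pdiff_add_scaled by (cases a) auto
    show "(\<exists>b. ?Q b \<and> (\<forall>(x, y, z, t)\<in>U. pd i (?\<Phi> a) x y z t = ?\<Phi> b x y z t)) \<or>
        (\<exists>g. smooth_on U g \<and> (\<forall>(x, y, z, t)\<in>U. pd i (?\<Phi> a) x y z t = g x y z t))"
      if "?Q a" "i \<le> 3" for a i
    proof (rule disjI1)
      obtain f g where a: "a = (f, g)" and f: "smooth_on U f" and g: "smooth_on U g"
        using \<open>?Q a\<close> by auto
      have "\<forall>(x, y, z, t)\<in>U. pd i (?\<Phi> a) x y z t = ?\<Phi> (pd i f, pd i g) x y z t"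
        using pd_add_scaled[OF f g _ \<open>i \<le> 3\<close>] by (auto simp: a)
      moreover have "?Q (pd i f, pd i g)"
        using smooth_on_pd[OF f \<open>i \<le> 3\<close>] smooth_on_pd[OF g \<open>i \<le> 3\<close>] by simp
      ultimately show "\<exists>b. ?Q b \<and> (\<forall>(x, y, z, t)\<in>U. pd i (?\<Phi> a) x y z t = ?\<Phi> b x y z t)"
        by blast
    qed
  qed (use assms in auto)
  then show ?thesis
    by simp
qed

section \<open>Primitives vanishing at zero\<close>

(* The integral of g from 0 to w, rescaled to [0, 1] so that the sign of w needs no case distinction. *)
definition prim0 :: "(real \<Rightarrow> real) \<Rightarrow> real \<Rightarrow> real" where
  "prim0 g w = w * integral {0..1} (\<lambda>u. g (w * u))"

lemma mult_mem_convex_0: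
  fixes w u :: real
  assumes "convex S" "0 \<in> S" "w \<in> S" "u \<in> {0..1}"
  shows "w * u \<in> S"
proof -
  have "u *\<^sub>R w + (1 - u) *\<^sub>R 0 \<in> S"
    using assms by (intro convexD) auto
  then show ?thesis
    by (simp add: mult.commute)
qed

lemma continuous_on_rescaled:
  fixes w :: "'a::topological_space \<Rightarrow> real"
  assumes "continuous_on (A \<times> S) (\<lambda>(p, v). k p v)" "continuous_on A w" "\<And>p. p \<in> A \<Longrightarrow> w p \<in> S"
    and "convex S" "0 \<in> S"
  shows "continuous_on (A \<times> {0..1}) (\<lambda>(p, u). k p (w p * u))"
proof -
  have w_cont: "continuous_on (A \<times> {0..1}) (\<lambda>q. w (fst q))"
    by (rule continuous_on_compose2[OF assms(2)]) (auto intro: continuous_intros)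
  have "continuous_on (A \<times> {0..1}) (\<lambda>q. (fst q, w (fst q) * snd q))"
    by (intro continuous_on_Pair continuous_on_mult' w_cont continuous_on_fst continuous_on_snd continuous_on_id)
  moreover have "(\<lambda>q. (fst q, w (fst q) * snd q)) ` (A \<times> {0..1}) \<subseteq> A \<times> S"
    using assms(3-5) mult_mem_convex_0 by auto
  ultimately show ?thesis
    using continuous_on_compose2[OF assms(1)] by (fastforce simp: case_prod_unfold)
qed

lemma continuous_on_prim0:
  fixes w :: "'a::topological_space \<Rightarrow> real"
  assumes "continuous_on (A \<times> S) (\<lambda>(p, v). k p v)" "continuous_on A w" "\<And>p. p \<in> A \<Longrightarrow> w p \<in> S"
    and "convex S" "0 \<in> S"
  shows "continuous_on A (\<lambda>p. prim0 (k p) (w p))"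
proof -
  have "continuous_on A (\<lambda>p. integral (cbox 0 1) (\<lambda>u. k p (w p * u)))"
    using continuous_on_rescaled[OF assms] by (intro integral_continuous_on_param) simp
  then show ?thesis
    unfolding prim0_def by (intro continuous_intros assms(2)) simp
qed

lemma has_field_derivative_integral_param:
  fixes k k' :: "real \<Rightarrow> real \<Rightarrow> real"
  assumes "open T" "convex T" "s0 \<in> T"
    and "\<And>s u. s \<in> T \<Longrightarrow> u \<in> {0..1} \<Longrightarrow> ((\<lambda>s. k s u) has_field_derivative k' s u) (at s)"
    and "continuous_on (T \<times> {0..1}) (\<lambda>(s, u). k s u)" "continuous_on (T \<times> {0..1}) (\<lambda>(s, u). k' s u)"
  shows "((\<lambda>s. integral {0..1} (k s)) has_field_derivative integral {0..1} (k' s0)) (at s0)"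
proof -
  have slice: "continuous_on {0..1} (k s)" if "s \<in> T" for s
    using continuous_on_compose2[OF assms(5), of "{0..1}" "\<lambda>u. (s, u)"] that
    by (simp add: continuous_on_Pair image_subset_iff)
  have "((\<lambda>s. integral (cbox 0 1) (k s)) has_field_derivative integral (cbox 0 1) (k' s0)) (at s0 within T)"
  proof (rule leibniz_rule_field_derivative[where f = k and fx = k' and U = T and a = 0 and b = 1])
    show "\<And>s u. s \<in> T \<Longrightarrow> u \<in> cbox 0 1 \<Longrightarrow> ((\<lambda>s. k s u) has_field_derivative k' s u) (at s within T)"
      using assms(4) by (auto intro: has_field_derivative_at_within)
    show "\<And>s. s \<in> T \<Longrightarrow> k s integrable_on cbox 0 1"
      using slice by (auto intro: integrable_continuous_interval)
    show "continuous_on (T \<times> cbox 0 1) (\<lambda>(s, u). k' s u)"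
      using assms(6) by simp
  qed (use assms(2,3) in auto)
  then show ?thesis
    using at_within_open[OF assms(3,1)] by simp
qed

lemma prim0_param_has_field_derivative:
  fixes k k' :: "real \<Rightarrow> real \<Rightarrow> real"
  assumes "open T" "convex T" "s0 \<in> T" "convex S" "0 \<in> S" "w \<in> S"
    and "\<And>s v. s \<in> T \<Longrightarrow> v \<in> S \<Longrightarrow> ((\<lambda>s. k s v) has_field_derivative k' s v) (at s)"
    and "continuous_on (T \<times> S) (\<lambda>(s, v). k s v)" "continuous_on (T \<times> S) (\<lambda>(s, v). k' s v)"
  shows "((\<lambda>s. prim0 (k s) w) has_field_derivative prim0 (k' s0) w) (at s0)"
proof -
  have "((\<lambda>s. integral {0..1} (\<lambda>u. k s (w * u))) has_field_derivative
      integral {0..1} (\<lambda>u. k' s0 (w * u))) (at s0)"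
  proof (rule has_field_derivative_integral_param[OF assms(1-3)])
    show "((\<lambda>s. k s (w * u)) has_field_derivative k' s (w * u)) (at s)" if "s \<in> T" "u \<in> {0..1}" for s u
      using assms(7)[OF that(1) mult_mem_convex_0[OF assms(4-6) that(2)]] .
    show "continuous_on (T \<times> {0..1}) (\<lambda>(s, u). k s (w * u))"
      using continuous_on_rescaled[OF assms(8), of "\<lambda>_. w"] assms(4-6) by simp
    show "continuous_on (T \<times> {0..1}) (\<lambda>(s, u). k' s (w * u))"
      using continuous_on_rescaled[OF assms(9), of "\<lambda>_. w"] assms(4-6) by simp
  qed
  then show ?thesis
    unfolding prim0_def by (rule DERIV_cmult)
qed

lemma prim0_derivative:
  fixes g g' :: "real \<Rightarrow> real"
  assumes "convex S" "0 \<in> S" "w \<in> S"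
    and "\<And>s. s \<in> S \<Longrightarrow> (g has_field_derivative g' s) (at s)"
  shows "prim0 g' w = g w - g 0"
proof -
  have "((\<lambda>u. g' (w * u) * w) has_integral g (w * 1) - g (w * 0)) {0..1}"
  proof (rule fundamental_theorem_of_calculus)
    fix u :: real
    assume "u \<in> {0..1}"
    then have "((\<lambda>u. g (w * u)) has_field_derivative g' (w * u) * w) (at u)"
      using assms(4)[OF mult_mem_convex_0[OF assms(1-3)]]
      by (auto intro!: DERIV_chain2[of g] derivative_eq_intros)
    then show "((\<lambda>u. g (w * u)) has_vector_derivative g' (w * u) * w) (at u within {0..1})"
      by (simp add: has_real_derivative_iff_has_vector_derivative[symmetric] has_field_derivative_at_within)
  qed simp
  then have "integral {0..1} (\<lambda>u. g' (w * u)) * w = g w - g 0"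
    by (simp add: integral_unique flip: integral_mult_left)
  then show ?thesis
    unfolding prim0_def by (simp add: mult.commute)
qed

lemma integral_rescaled_by_parts:
  fixes g g' :: "real \<Rightarrow> real"
  assumes "convex S" "0 \<in> S" "w \<in> S"
    and "\<And>s. s \<in> S \<Longrightarrow> (g has_field_derivative g' s) (at s)"
    and "continuous_on {0..1} (\<lambda>u. g (w * u))" "continuous_on {0..1} (\<lambda>u. g' (w * u) * u)"
  shows "w * integral {0..1} (\<lambda>u. g' (w * u) * u) + integral {0..1} (\<lambda>u. g (w * u)) = g w"
proof -
  have "((\<lambda>u. w * (g' (w * u) * u) + g (w * u)) has_integral
      w * integral {0..1} (\<lambda>u. g' (w * u) * u) + integral {0..1} (\<lambda>u. g (w * u))) {0..1}"
    using assms(5,6)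
    by (intro has_integral_add has_integral_mult_right integrable_integral integrable_continuous_interval)
  moreover have "((\<lambda>u. w * (g' (w * u) * u) + g (w * u)) has_integral 1 * g (w * 1) - 0 * g (w * 0)) {0..1}"
  proof (rule fundamental_theorem_of_calculus)
    fix u :: real
    assume "u \<in> {0..1}"
    then have "((\<lambda>u. g (w * u)) has_field_derivative g' (w * u) * w) (at u)"
      using assms(4)[OF mult_mem_convex_0[OF assms(1-3)]]
      by (auto intro!: DERIV_chain2[of g] derivative_eq_intros)
    from DERIV_mult'[OF DERIV_ident this]
    have "((\<lambda>u. u * g (w * u)) has_field_derivative w * (g' (w * u) * u) + g (w * u)) (at u)"
      by (simp add: algebra_simps)
    then show "((\<lambda>u. u * g (w * u)) has_vector_derivative w * (g' (w * u) * u) + g (w * u)) (at u within {0..1})"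
      by (simp add: has_real_derivative_iff_has_vector_derivative[symmetric] has_field_derivative_at_within)
  qed simp
  ultimately show ?thesis
    by (simp add: has_integral_unique)
qed

lemma prim0_has_field_derivative:
  fixes g g' :: "real \<Rightarrow> real"
  assumes "open S" "convex S" "0 \<in> S" "w \<in> S"
    and g': "\<And>s. s \<in> S \<Longrightarrow> (g has_field_derivative g' s) (at s)"
    and "continuous_on S g'"
  shows "(prim0 g has_field_derivative g w) (at w)"
proof -
  have mem: "s * u \<in> S" if "s \<in> S" "u \<in> {0..1}" for s u
    using mult_mem_convex_0[OF assms(2,3) that] .
  have "continuous_on S g"
    using g' by (intro continuous_at_imp_continuous_on) (meson DERIV_isCont)
  then have cont: "continuous_on (S \<times> {0..1}) (\<lambda>q. g (fst q * snd q))"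
    "continuous_on (S \<times> {0..1}) (\<lambda>q. g' (fst q * snd q))"
    using mem by (auto intro!: continuous_on_compose2[OF _ continuous_on_mult'] continuous_intros assms(6))
  have "((\<lambda>s. integral {0..1} (\<lambda>u. g (s * u))) has_field_derivative
      integral {0..1} (\<lambda>u. g' (w * u) * u)) (at w)"
  proof (rule has_field_derivative_integral_param[OF assms(1,2,4)])
    show "((\<lambda>s. g (s * u)) has_field_derivative g' (s * u) * u) (at s)" if "s \<in> S" "u \<in> {0..1}" for s u
      by (rule DERIV_chain2[where g = "\<lambda>s. s * u", OF g'[OF mem[OF that]]]) (auto intro!: derivative_eq_intros)
  qed (use cont in \<open>auto simp: case_prod_unfold intro!: continuous_intros\<close>)
  from DERIV_mult'[OF DERIV_ident this]
  have deriv: "(prim0 g has_field_derivative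
      w * integral {0..1} (\<lambda>u. g' (w * u) * u) + integral {0..1} (\<lambda>u. g (w * u))) (at w)"
    unfolding prim0_def[abs_def] by simp
  have "continuous_on {0..1} (\<lambda>u. (w, u))" "(\<lambda>u. (w, u)) ` {0..1} \<subseteq> S \<times> {0..1}"
    using assms(4) by (auto intro!: continuous_intros)
  from continuous_on_compose2[OF cont(1) this] continuous_on_compose2[OF cont(2) this]
  have "continuous_on {0..1} (\<lambda>u. g (w * u))" "continuous_on {0..1} (\<lambda>u. g' (w * u) * u)"
    by (auto intro!: continuous_intros)
  with deriv show ?thesis
    using integral_rescaled_by_parts[OF assms(2-4) g'] by simp
qed

lemma continuous_on_compose_field:
  assumes "continuous_on U (\<lambda>(x, y, z, t). h x y z t)"
    and "continuous_on A (\<lambda>q. (f1 q, f2 q, f3 q, f4 q))"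
    and "\<And>q. q \<in> A \<Longrightarrow> (f1 q, f2 q, f3 q, f4 q) \<in> U"
  shows "continuous_on A (\<lambda>q. h (f1 q) (f2 q) (f3 q) (f4 q))"
  using continuous_on_compose2[OF assms(1,2)] assms(3) by (auto simp: image_subset_iff)

definition prim_z :: "field \<Rightarrow> field" where
  "prim_z h = (\<lambda>x y z t. prim0 (\<lambda>s. h x y s t) z)"

lemma prim_z_partials:
  assumes h: "smooth_on layer h" and "(x, y, z, t) \<in> layer"
  shows "((\<lambda>s. prim_z h s y z t) has_field_derivative prim_z (dX h) x y z t) (at x)"
    and "((\<lambda>s. prim_z h x s z t) has_field_derivative prim_z (dY h) x y z t) (at y)"
    and "((\<lambda>s. prim_z h x y s t) has_field_derivative h x y z t) (at z)"
    and "((\<lambda>s. prim_z h x y z s) has_field_derivative prim_z (dT h) x y z t) (at t)"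
proof -
  let ?S = "{-1/2<..<1/2 :: real}"
  have S: "open ?S" "convex ?S" "0 \<in> ?S" "z \<in> ?S"
    using assms(2) by auto
  have plane: "continuous_on (UNIV \<times> ?S) (\<lambda>(s, v). g s y v t)"
    "continuous_on (UNIV \<times> ?S) (\<lambda>(s, v). g x s v t)"
    "continuous_on (UNIV \<times> ?S) (\<lambda>(s, v). g x y v s)"
    "continuous_on ?S (\<lambda>v. g x y v t)"
    if "smooth_on layer g" for g
    by (auto simp: case_prod_unfold
        intro!: continuous_on_compose_field[OF smooth_on_imp_continuous_on[OF that]] continuous_intros)
  note D = smooth_on_partials[OF h]
  note plane_pd = plane[OF smooth_on_pd[OF h]]
  show "((\<lambda>s. prim_z h s y z t) has_field_derivative prim_z (dX h) x y z t) (at x)"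
    "((\<lambda>s. prim_z h x s z t) has_field_derivative prim_z (dY h) x y z t) (at y)"
    "((\<lambda>s. prim_z h x y z s) has_field_derivative prim_z (dT h) x y z t) (at t)"
    unfolding prim_z_def
    by (rule prim0_param_has_field_derivative[where T = UNIV and S = ?S];
        use S D plane[OF h] plane_pd in simp)+
  show "((\<lambda>s. prim_z h x y s t) has_field_derivative h x y z t) (at z)"
    unfolding prim_z_def
    by (rule prim0_has_field_derivative[OF S]; use D plane_pd[of 2] in simp)
qed

lemma
  assumes "smooth_on layer h" "(x, y, z, t) \<in> layer" "i \<le> 3"
  shows pd_prim_z: "pd i (prim_z h) x y z t = (if i = 2 then h x y z t else prim_z (pd i h) x y z t)"
    and pdiff_prim_z: "pdiff i (prim_z h) x y z t"
  using prim_z_partials[OF assms(1,2)]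
  by (intro partials_imp_pd_pdiff[where D = "\<lambda>i. if i = 2 then h x y z t else prim_z (pd i h) x y z t"]
      assms(3); simp)+

lemma continuous_on_prim_z:
  assumes "continuous_on layer (\<lambda>(x, y, z, t). h x y z t)"
  shows "continuous_on layer (\<lambda>(x, y, z, t). prim_z h x y z t)"
proof -
  have "continuous_on layer
      (\<lambda>p. prim0 (\<lambda>v. h (fst p) (fst (snd p)) v (snd (snd (snd p)))) (fst (snd (snd p))))"
    by (rule continuous_on_prim0[where S = "{-1/2<..<1/2}"])
      (auto simp: case_prod_unfold layer_def intro!: continuous_on_compose_field[OF assms] continuous_intros)
  then show ?thesis
    by (simp add: prim_z_def case_prod_unfold)
qed

lemma smooth_on_prim_z:
  assumes "smooth_on layer h"
  shows "smooth_on layer (prim_z h)"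
proof (rule smooth_on_family[where Q = "smooth_on layer" and \<Phi> = prim_z, OF open_layer _ _ _ assms])
  show "continuous_on layer (\<lambda>(x, y, z, t). prim_z g x y z t)" if "smooth_on layer g" for g
    by (rule continuous_on_prim_z[OF smooth_on_imp_continuous_on[OF that]])
  show "pdiff i (prim_z g) x y z t" if "smooth_on layer g" "i \<le> 3" "(x, y, z, t) \<in> layer" for g i x y z t
    using pdiff_prim_z[OF that(1,3,2)] .
  show "(\<exists>g'. smooth_on layer g' \<and> (\<forall>(x, y, z, t)\<in>layer. pd i (prim_z g) x y z t = prim_z g' x y z t)) \<or>
      (\<exists>g'. smooth_on layer g' \<and> (\<forall>(x, y, z, t)\<in>layer. pd i (prim_z g) x y z t = g' x y z t))"
    if "smooth_on layer g" "i \<le> 3" for g i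
  proof (cases "i = 2")
    case True
    then show ?thesis
      using pd_prim_z[OF that(1) _ that(2)] that(1) by auto
  next
    case False
    then show ?thesis
      using pd_prim_z[OF that(1) _ that(2)] smooth_on_pd[OF that] by auto
  qed
qed

definition prim_x :: "field \<Rightarrow> field" where
  "prim_x h = (\<lambda>x y z t. prim0 (\<lambda>s. h s y z t) x)"

lemma prim_x_partials:
  assumes h: "smooth_on layer h" and "(x, y, z, t) \<in> layer"
  shows "((\<lambda>s. prim_x h s y z t) has_field_derivative h x y z t) (at x)"
    and "((\<lambda>s. prim_x h x s z t) has_field_derivative prim_x (dY h) x y z t) (at y)"
    and "((\<lambda>s. prim_x h x y s t) has_field_derivative prim_x (dZ h) x y z t) (at z)"
    and "((\<lambda>s. prim_x h x y z s) has_field_derivative prim_x (dT h) x y z t) (at t)"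
proof -
  let ?S = "{-1/2<..<1/2 :: real}"
  have S: "open ?S" "convex ?S" "z \<in> ?S"
    using assms(2) by auto
  have plane: "continuous_on (UNIV \<times> UNIV) (\<lambda>(s, v). g v s z t)"
    "continuous_on (?S \<times> UNIV) (\<lambda>(s, v). g v y s t)"
    "continuous_on (UNIV \<times> UNIV) (\<lambda>(s, v). g v y z s)"
    "continuous_on UNIV (\<lambda>v. g v y z t)"
    if "smooth_on layer g" for g
    using assms(2)
    by (auto simp: case_prod_unfold
        intro!: continuous_on_compose_field[OF smooth_on_imp_continuous_on[OF that]] continuous_intros)
  note D = smooth_on_partials[OF h]
  note plane_pd = plane[OF smooth_on_pd[OF h]]
  show "((\<lambda>s. prim_x h s y z t) has_field_derivative h x y z t) (at x)"
    unfolding prim_x_def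
    by (rule prim0_has_field_derivative[where S = UNIV]; use assms(2) D plane_pd[of 0] in simp)
  show "((\<lambda>s. prim_x h x s z t) has_field_derivative prim_x (dY h) x y z t) (at y)"
    "((\<lambda>s. prim_x h x y z s) has_field_derivative prim_x (dT h) x y z t) (at t)"
    unfolding prim_x_def
    by (rule prim0_param_has_field_derivative[where T = UNIV and S = UNIV];
        use assms(2) D plane[OF h] plane_pd in simp)+
  show "((\<lambda>s. prim_x h x y s t) has_field_derivative prim_x (dZ h) x y z t) (at z)"
    unfolding prim_x_def
    by (rule prim0_param_has_field_derivative[where T = ?S and S = UNIV];
        use S D plane[OF h] plane_pd in simp)
qed

lemma
  assumes "smooth_on layer h" "(x, y, z, t) \<in> layer" "i \<le> 3"
  shows pd_prim_x: "pd i (prim_x h) x y z t = (if i = 0 then h x y z t else prim_x (pd i h) x y z t)"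
    and pdiff_prim_x: "pdiff i (prim_x h) x y z t"
  using prim_x_partials[OF assms(1,2)]
  by (intro partials_imp_pd_pdiff[where D = "\<lambda>i. if i = 0 then h x y z t else prim_x (pd i h) x y z t"]
      assms(3); simp)+

lemma continuous_on_prim_x:
  assumes "continuous_on layer (\<lambda>(x, y, z, t). h x y z t)"
  shows "continuous_on layer (\<lambda>(x, y, z, t). prim_x h x y z t)"
proof -
  have "continuous_on layer
      (\<lambda>p. prim0 (\<lambda>v. h v (fst (snd p)) (fst (snd (snd p))) (snd (snd (snd p)))) (fst p))"
    by (rule continuous_on_prim0[where S = UNIV])
      (auto simp: case_prod_unfold layer_def intro!: continuous_on_compose_field[OF assms] continuous_intros)
  then show ?thesis
    by (simp add: prim_x_def case_prod_unfold)
qed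

lemma smooth_on_prim_x:
  assumes "smooth_on layer h"
  shows "smooth_on layer (prim_x h)"
proof (rule smooth_on_family[where Q = "smooth_on layer" and \<Phi> = prim_x, OF open_layer _ _ _ assms])
  show "continuous_on layer (\<lambda>(x, y, z, t). prim_x g x y z t)" if "smooth_on layer g" for g
    by (rule continuous_on_prim_x[OF smooth_on_imp_continuous_on[OF that]])
  show "pdiff i (prim_x g) x y z t" if "smooth_on layer g" "i \<le> 3" "(x, y, z, t) \<in> layer" for g i x y z t
    using pdiff_prim_x[OF that(1,3,2)] .
  show "(\<exists>g'. smooth_on layer g' \<and> (\<forall>(x, y, z, t)\<in>layer. pd i (prim_x g) x y z t = prim_x g' x y z t)) \<or>
      (\<exists>g'. smooth_on layer g' \<and> (\<forall>(x, y, z, t)\<in>layer. pd i (prim_x g) x y z t = g' x y z t))"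
    if "smooth_on layer g" "i \<le> 3" for g i
  proof (cases "i = 0")
    case True
    then show ?thesis
      using pd_prim_x[OF that(1) _ that(2)] that(1) by auto
  next
    case False
    then show ?thesis
      using pd_prim_x[OF that(1) _ that(2)] smooth_on_pd[OF that] by auto
  qed
qed

definition slice_z0 :: "field \<Rightarrow> field" where
  "slice_z0 h = (\<lambda>x y z t. h x y 0 t)"

lemma pd_slice_z0: "pd i (slice_z0 h) = (if i = 2 then (\<lambda>x y z t. 0) else slice_z0 (pd i h))"
  by (auto simp: pd_def slice_z0_def fun_eq_iff)

lemma smooth_on_slice_z0:
  assumes "smooth_on layer h"
  shows "smooth_on layer (slice_z0 h)"
proof (rule smooth_on_family[where Q = "smooth_on layer" and \<Phi> = slice_z0, OF open_layer _ _ _ assms])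
  show "continuous_on layer (\<lambda>(x, y, z, t). slice_z0 g x y z t)" if "smooth_on layer g" for g
    unfolding slice_z0_def case_prod_unfold
    by (auto intro!: continuous_on_compose_field[OF smooth_on_imp_continuous_on[OF that]] continuous_intros)
  show "pdiff i (slice_z0 g) x y z t" if "smooth_on layer g" "i \<le> 3" "(x, y, z, t) \<in> layer" for g i x y z t
    using smooth_on_imp_pdiff[OF that(1,2), of x y 0 t] by (simp add: pdiff_def slice_z0_def)
  show "(\<exists>g'. smooth_on layer g' \<and> (\<forall>(x, y, z, t)\<in>layer. pd i (slice_z0 g) x y z t = slice_z0 g' x y z t)) \<or>
      (\<exists>g'. smooth_on layer g' \<and> (\<forall>(x, y, z, t)\<in>layer. pd i (slice_z0 g) x y z t = g' x y z t))"
    if "smooth_on layer g" "i \<le> 3" for g i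
    using smooth_on_const[OF open_layer, of 0] smooth_on_pd[OF that] by (auto simp: pd_slice_z0)
qed

section \<open>The stream function\<close>

lemma indep_y_imp_dY_eq_0:
  assumes "indep_y f" "-1/2 < z" "z < 1/2"
  shows "dY f x y z t = 0"
proof -
  have "(\<lambda>s. f x s z t) = (\<lambda>s. f x y z t)"
    using assms by (auto simp: indep_y_def)
  then show ?thesis
    by (simp add: pd_def)
qed

lemma exists_stream_function:
  assumes f: "smooth_on layer f" and g: "smooth_on layer g"
    and "indep_y f" "indep_y g"
    and div: "\<forall>(x, y, z, t)\<in>layer. dX f x y z t + dZ g x y z t = 0"
  shows "\<exists>\<psi>. smooth_on layer \<psi> \<and> (\<forall>(x, y, z, t)\<in>layer.
    dX \<psi> x y z t = - g x y z t \<and> dY \<psi> x y z t = 0 \<and> dZ \<psi> x y z t = f x y z t)"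
proof -
  define \<psi> where "\<psi> = (\<lambda>x y z t. prim_z f x y z t + (-1) * prim_x (slice_z0 g) x y z t)"
  have F: "smooth_on layer (prim_z f)" and G0: "smooth_on layer (slice_z0 g)"
    and G: "smooth_on layer (prim_x (slice_z0 g))"
    using f g by (simp_all add: smooth_on_prim_z smooth_on_prim_x smooth_on_slice_z0)
  have "dX \<psi> x y z t = - g x y z t \<and> dY \<psi> x y z t = 0 \<and> dZ \<psi> x y z t = f x y z t"
    if "(x, y, z, t) \<in> layer" for x y z t
  proof -
    let ?S = "{-1/2<..<1/2 :: real}"
    have S: "convex ?S" "0 \<in> ?S" "z \<in> ?S"
      using that by auto
    have pd_\<psi>: "pd i \<psi> x y z t = pd i (prim_z f) x y z t - pd i (prim_x (slice_z0 g)) x y z t"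
      if "i \<le> 3" for i
      using pd_add_scaled[OF F G \<open>(x, y, z, t) \<in> layer\<close> that, of "-1"] unfolding \<psi>_def by simp
    have minus_g: "((\<lambda>v. - g x y v t) has_field_derivative dX f x y v t) (at v)" if "v \<in> ?S" for v
    proof -
      have "dX f x y v t = - dZ g x y v t"
        using bspec[OF div, of "(x, y, v, t)"] that by simp
      then show ?thesis
        using DERIV_minus[OF smooth_on_partials(3)[OF g, of x y v t]] that by simp
    qed
    have dX_f: "prim_z (dX f) x y z t = - g x y z t + g x y 0 t"
      unfolding prim_z_def using prim0_derivative[OF S minus_g] by simp
    have zero: "((\<lambda>v. 0) has_field_derivative dY f x y v t) (at v)" if "v \<in> ?S" for v
      using indep_y_imp_dY_eq_0[OF \<open>indep_y f\<close>] that by simp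
    have dY_f: "prim_z (dY f) x y z t = 0"
      unfolding prim_z_def using prim0_derivative[OF S zero] by simp
    have dY_g: "prim_x (slice_z0 (dY g)) x y z t = 0"
      using indep_y_imp_dY_eq_0[OF \<open>indep_y g\<close>, of 0] by (simp add: prim_x_def slice_z0_def prim0_def)
    have "dX (prim_x (slice_z0 g)) x y z t = g x y 0 t"
      using pd_prim_x[OF G0 that, of 0] by (simp add: slice_z0_def)
    moreover have "dY (prim_x (slice_z0 g)) x y z t = 0"
      using pd_prim_x[OF G0 that, of 1] dY_g by (simp add: pd_slice_z0)
    moreover have "dZ (prim_x (slice_z0 g)) x y z t = 0"
      using pd_prim_x[OF G0 that, of 2] by (simp add: pd_slice_z0 prim_x_def prim0_def)
    ultimately show ?thesis
      using pd_\<psi>[of 0] pd_\<psi>[of 1] pd_\<psi>[of 2] pd_prim_z[OF f that] dX_f dY_f by simp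
  qed
  moreover have "smooth_on layer \<psi>"
    unfolding \<psi>_def by (rule smooth_on_add_scaled[OF open_layer F G])
  ultimately show ?thesis
    by blast
qed

lemma boussinesq_change_O2:
  assumes "boussinesq P R O1 O2 O3 vx vy vz \<theta> p"
    and "\<forall>(x, y, z, t)\<in>layer. dX q x y z t = dX p x y z t - P * (O2' - O2) * vz x y z t
      \<and> dY q x y z t = dY p x y z t \<and> dZ q x y z t = dZ p x y z t + P * (O2' - O2) * vx x y z t"
  shows "boussinesq P R O1 O2' O3 vx vy vz \<theta> q"
proof (unfold boussinesq_def ball_layer_iff Let_def, intro allI impI, goal_cases)
  case (1 x y z t)
  then show ?case
    using assms(1)[unfolded boussinesq_def, THEN bspec, of "(x, y, z, t)"]
      assms(2)[THEN bspec, of "(x, y, z, t)"]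
    by (simp add: Let_def algebra_simps)
qed

theorem theorem1:
  fixes P R O1 O3 :: real and vx vy vz \<theta> p :: field
  assumes "smooth_on layer vx" "smooth_on layer vy" "smooth_on layer vz"
      and "smooth_on layer \<theta>" "smooth_on layer p"
      and "boussinesq P R O1 0 O3 vx vy vz \<theta> p"
      and "indep_y vx" "indep_y vy" "indep_y vz" "indep_y \<theta>"
  shows "\<forall>O2::real. \<exists>p'::field. smooth_on layer p' \<and>
           boussinesq P R O1 O2 O3 vx vy vz \<theta> p'"
proof
  fix O2 :: real
  have "\<forall>(x, y, z, t)\<in>layer. dX vx x y z t + dZ vz x y z t = 0"
    using assms(6) indep_y_imp_dY_eq_0[OF assms(8)] by (auto simp: boussinesq_def Let_def)
  then obtain \<psi> where \<psi>: "smooth_on layer \<psi>"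
    and d\<psi>: "\<forall>(x, y, z, t)\<in>layer. dX \<psi> x y z t = - vz x y z t \<and> dY \<psi> x y z t = 0 \<and> dZ \<psi> x y z t = vx x y z t"
    using exists_stream_function[OF assms(1,3,7,9)] by blast
  define p' where "p' = (\<lambda>x y z t. p x y z t + (P * O2) * \<psi> x y z t)"
  have "smooth_on layer p'"
    unfolding p'_def by (rule smooth_on_add_scaled[OF open_layer assms(5) \<psi>])
  moreover have "boussinesq P R O1 O2 O3 vx vy vz \<theta> p'"
  proof (rule boussinesq_change_O2[OF assms(6)])
    show "\<forall>(x, y, z, t)\<in>layer. dX p' x y z t = dX p x y z t - P * (O2 - 0) * vz x y z t
      \<and> dY p' x y z t = dY p x y z t \<and> dZ p' x y z t = dZ p x y z t + P * (O2 - 0) * vx x y z t"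
      using d\<psi> pd_add_scaled[OF assms(5) \<psi>] unfolding p'_def by auto
  qed
  ultimately show "\<exists>p'. smooth_on layer p' \<and> boussinesq P R O1 O2 O3 vx vy vz \<theta> p'"
    by blast
qed

end
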